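(* Let $V$ be a complex Hermitian vector space of dimension $N$ with a fixed orthonormal basis $e_1,\ldots,e_N$. For $S\subset\{1,\ldots,N\}$ let $\mathcal L_S=\mathrm{span}\{e_i\}_{i\in S}$, and let $\mathcal L_S^*\subset\mathcal L_S$ be the set of vectors all of whose coordinates with respect to $\{e_i\}_{i\in S}$ are non-zero. Let $K,M$ be positive integers with $K\le N-M$. Then for any $w\in\mathcal L^*_{\{1,\ldots,K\}}$, a generic $M$-dimensional linear subspace $\mathcal L\in\mathrm{Gr}_w(M,V)$ satisfies: (1) $\mathcal L\cap\mathcal L_{\{1,\ldots,K\}}$ is the line spanned by $w$; (2) $\mathcal L\cap\mathcal L_S=\{0\}$ for every $S\subset\{1,\ldots,N\}$ with $|S|=K$ and $S\ne\{1,\ldots,K\}$.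
   Context: $\mathrm{Gr}_w(M,V)$ denotes the subvariety of the Grassmannian of $M$-dimensional linear subspaces of $V$ consisting of those subspaces containing $w$. "Generic" means: for all $\mathcal L$ outside a proper algebraic (Zariski-closed) subset of $\mathrm{Gr}_w(M,V)$. *)

theory Defs
  imports Complex_Main
begin

text \<open>Conventions. V = C^N is modelled as functions nat => complex supported on
  {0..<N}; the orthonormal basis e_1..e_N is the standard basis, with index i
  (paper) corresponding to index i-1 here.\<close>

definition inV :: "nat \<Rightarrow> (nat \<Rightarrow> complex) \<Rightarrow> bool" where
  "inV N x \<longleftrightarrow> (\<forall>i\<ge>N. x i = 0)"

definition coordsub :: "nat set \<Rightarrow> (nat \<Rightarrow> complex) set" where
  "coordsub S = {x. \<forall>i. i \<notin> S \<longrightarrow> x i = 0}"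

definition coordsub_star :: "nat set \<Rightarrow> (nat \<Rightarrow> complex) set" where
  "coordsub_star S = {x \<in> coordsub S. \<forall>i\<in>S. x i \<noteq> 0}"

definition lspan :: "(nat \<Rightarrow> nat \<Rightarrow> complex) \<Rightarrow> nat \<Rightarrow> (nat \<Rightarrow> complex) set" where
  "lspan F m = {x. \<exists>c::nat \<Rightarrow> complex. x = (\<lambda>i. \<Sum>j<m. c j * F j i)}"

definition lin_indep :: "(nat \<Rightarrow> nat \<Rightarrow> complex) \<Rightarrow> nat \<Rightarrow> bool" where
  "lin_indep F m \<longleftrightarrow>
     (\<forall>c::nat \<Rightarrow> complex. (\<lambda>i. \<Sum>j<m. c j * F j i) = (\<lambda>i. 0) \<longrightarrow> (\<forall>j<m. c j = 0))"

inductive polyfun :: "(((nat \<times> nat) \<Rightarrow> complex) \<Rightarrow> complex) \<Rightarrow> bool" where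
  pf_const: "polyfun (\<lambda>x. c)"
| pf_var: "polyfun (\<lambda>x. x v)"
| pf_add: "polyfun p \<Longrightarrow> polyfun q \<Longrightarrow> polyfun (\<lambda>x. p x + q x)"
| pf_mult: "polyfun p \<Longrightarrow> polyfun q \<Longrightarrow> polyfun (\<lambda>x. p x * q x)"

text \<open>Frame attached to parameters x: first vector w, then the M-1 vectors
  v_j = (x (j,i))_{i<N}.  Every L in Gr_w(M,V) is the span of such a frame.\<close>
definition frame :: "nat \<Rightarrow> (nat \<Rightarrow> complex) \<Rightarrow> ((nat \<times> nat) \<Rightarrow> complex) \<Rightarrow> nat \<Rightarrow> nat \<Rightarrow> complex" where
  "frame N w x j i = (if j = 0 then w i else if i < N then x (j - 1, i) else 0)"

end

theory Submission
  imports Defs "Jordan_Normal_Form.Determinant" "HOL-Computational_Algebra.Polynomial"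
begin

text \<open>For a repetition-free list R of M row indices whose first row r has w_r ~= 0, the
  minor of the frame (w, v_1, ..., v_(M-1)) on the rows R is a polynomial in the
  parameters that is not identically zero (take v_j = e_(R!j)); where it is nonzero, the
  only vector of L vanishing on all rows of R is 0. If |S| = K and S ~= {1..K}, then S
  misses some k <= K, and K + M <= N leaves room for such an R starting at k and avoiding
  S, so L meets L_S trivially. For (1), take R to be row 1 followed by M - 1 rows beyond
  K: for y in L and in L_{1..K}, the vector y - (y_1 / w_1) w of L vanishes on R, so y is
  a multiple of w. The product of these finitely many minors is again not identically
  zero, because on a suitable line it restricts to a nonzero univariate polynomial.\<close>

lemma polyfun_sum:
  "finite A \<Longrightarrow> (\<And>a. a \<in> A \<Longrightarrow> polyfun (f a)) \<Longrightarrow> polyfun (\<lambda>x. \<Sum>a\<in>A. f a x)"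
  by (induction A rule: finite_induct) (auto intro: polyfun.intros)

lemma polyfun_prod:
  "finite A \<Longrightarrow> (\<And>a. a \<in> A \<Longrightarrow> polyfun (f a)) \<Longrightarrow> polyfun (\<lambda>x. \<Prod>a\<in>A. f a x)"
  by (induction A rule: finite_induct) (auto intro: polyfun.intros)

lemma polyfun_det:
  assumes "\<And>l j. polyfun (g l j)"
  shows "polyfun (\<lambda>x. det (mat n n (\<lambda>(l, j). g l j x)))"
proof -
  have "det (mat n n (\<lambda>(l, j). g l j x)) =
      (\<Sum>p\<in>{p. p permutes {0..<n}}. signof p * (\<Prod>i\<in>{0..<n}. g i (p i) x))" for x
    unfolding det_def by (auto intro!: sum.cong prod.cong simp: permutes_in_image)
  moreover have "polyfun (\<lambda>x. \<Sum>p\<in>{p. p permutes {0..<n}}. signof p * (\<Prod>i\<in>{0..<n}. g i (p i) x))"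
    by (intro polyfun_sum polyfun_prod polyfun.intros assms finite_permutations finite_atLeastLessThan)
  ultimately show ?thesis
    by simp
qed

lemma polyfun_on_line:
  assumes "polyfun P"
  shows "\<exists>p. \<forall>t. P (\<lambda>v. a v + t * (b v - a v)) = poly p t"
  using assms
proof (induction rule: polyfun.induct)
  case (pf_const c)
  show ?case
    by (intro exI[of _ "[:c:]"]) simp
next
  case (pf_var v)
  show ?case
    by (intro exI[of _ "[:a v, b v - a v:]"]) (simp add: algebra_simps)
next
  case (pf_add p q)
  then obtain p' q' where "\<forall>t. p (\<lambda>v. a v + t * (b v - a v)) = poly p' t"
    and "\<forall>t. q (\<lambda>v. a v + t * (b v - a v)) = poly q' t"
    by blast
  then show ?case
    by (intro exI[of _ "p' + q'"]) simp
next
  case (pf_mult p q)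
  then obtain p' q' where "\<forall>t. p (\<lambda>v. a v + t * (b v - a v)) = poly p' t"
    and "\<forall>t. q (\<lambda>v. a v + t * (b v - a v)) = poly q' t"
    by blast
  then show ?case
    by (intro exI[of _ "p' * q'"]) simp
qed

lemma polyfun_mult_nonvanishing:
  assumes "polyfun P" and "polyfun Q" and "P a \<noteq> 0" and "Q b \<noteq> 0"
  shows "\<exists>x. P x * Q x \<noteq> 0"
proof -
  obtain p where p: "\<And>t. P (\<lambda>v. a v + t * (b v - a v)) = poly p t"
    using polyfun_on_line[OF assms(1)] by blast
  obtain q where q: "\<And>t. Q (\<lambda>v. a v + t * (b v - a v)) = poly q t"
    using polyfun_on_line[OF assms(2)] by blast
  have "poly p 0 \<noteq> 0" and "poly q 1 \<noteq> 0"
    using p[of 0] q[of 1] assms(3,4) by simp_all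
  then have "p * q \<noteq> 0"
    by auto
  then have "finite {t. poly (p * q) t = 0}"
    by (rule poly_roots_finite)
  then obtain t :: complex where "poly (p * q) t \<noteq> 0"
    using ex_new_if_finite[OF infinite_UNIV_char_0] by blast
  then show ?thesis
    using p q by (intro exI[of _ "\<lambda>v. a v + t * (b v - a v)"]) simp
qed

lemma polyfun_prod_nonvanishing:
  assumes "finite A" and "\<And>a. a \<in> A \<Longrightarrow> polyfun (f a)" and "\<And>a. a \<in> A \<Longrightarrow> \<exists>x. f a x \<noteq> 0"
  shows "\<exists>x. (\<Prod>a\<in>A. f a x) \<noteq> 0"
  using assms
proof (induction A rule: finite_induct)
  case empty
  show ?case
    by simp
next
  case (insert a A)
  obtain x where "f a x \<noteq> 0"
    using insert.prems(2) by blast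
  moreover obtain y where "(\<Prod>a\<in>A. f a y) \<noteq> 0"
    using insert.IH insert.prems by blast
  moreover have "polyfun (\<lambda>x. \<Prod>a\<in>A. f a x)"
    using insert.hyps(1) insert.prems(1) by (rule polyfun_prod) simp
  ultimately obtain z where "f a z * (\<Prod>a\<in>A. f a z) \<noteq> 0"
    using polyfun_mult_nonvanishing insert.prems(1) by blast
  then show ?case
    using insert.hyps by auto
qed

lemma polyfun_common_nonvanishing:
  assumes "finite A" and "\<And>a. a \<in> A \<Longrightarrow> polyfun (f a)" and "\<And>a. a \<in> A \<Longrightarrow> \<exists>x. f a x \<noteq> 0"
  obtains P where "polyfun P" and "\<exists>x. P x \<noteq> 0" and "\<And>x a. P x \<noteq> 0 \<Longrightarrow> a \<in> A \<Longrightarrow> f a x \<noteq> 0"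
proof
  show "polyfun (\<lambda>x. \<Prod>a\<in>A. f a x)"
    using assms(1,2) by (rule polyfun_prod)
  show "\<exists>x. (\<Prod>a\<in>A. f a x) \<noteq> 0"
    using assms by (rule polyfun_prod_nonvanishing)
  show "f a x \<noteq> 0" if "(\<Prod>a\<in>A. f a x) \<noteq> 0" and "a \<in> A" for x a
    using that assms(1) by auto
qed

lemma det_mat_nonzero_iff:
  fixes g :: "nat \<Rightarrow> nat \<Rightarrow> 'a :: idom"
  shows "det (mat n n (\<lambda>(l, j). g l j)) \<noteq> 0 \<longleftrightarrow>
    (\<forall>c. (\<forall>l<n. (\<Sum>j<n. g l j * c j) = 0) \<longrightarrow> (\<forall>j<n. c j = 0))"
proof -
  let ?A = "mat n n (\<lambda>(l, j). g l j)"
  have A: "?A \<in> carrier_mat n n"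
    by simp
  have mult_vec: "(?A *\<^sub>v vec n c) $ l = (\<Sum>j<n. g l j * c j)" if "l < n" for c l
    using that by (auto simp: mult_mat_vec_def scalar_prod_def lessThan_atLeast0 intro!: sum.cong)
  show ?thesis
  proof
    assume det: "det ?A \<noteq> 0"
    show "\<forall>c. (\<forall>l<n. (\<Sum>j<n. g l j * c j) = 0) \<longrightarrow> (\<forall>j<n. c j = 0)"
    proof (intro allI impI)
      fix c j
      assume "\<forall>l<n. (\<Sum>j<n. g l j * c j) = 0" and "j < n"
      then have "?A *\<^sub>v vec n c = 0\<^sub>v n"
        using mult_vec by (intro eq_vecI) auto
      then have "vec n c = 0\<^sub>v n"
        using det det_0_iff_vec_prod_zero[OF A] vec_carrier by blast
      then show "c j = 0"
        using \<open>j < n\<close> by (metis index_vec index_zero_vec(1))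
    qed
  next
    assume trivial_kernel: "\<forall>c. (\<forall>l<n. (\<Sum>j<n. g l j * c j) = 0) \<longrightarrow> (\<forall>j<n. c j = 0)"
    show "det ?A \<noteq> 0"
    proof
      assume "det ?A = 0"
      then obtain v where v: "v \<in> carrier_vec n" "v \<noteq> 0\<^sub>v n" "?A *\<^sub>v v = 0\<^sub>v n"
        using det_0_iff_vec_prod_zero[OF A] by auto
      have "v = vec n (($) v)"
        using v(1) by auto
      then have "\<forall>l<n. (\<Sum>j<n. g l j * v $ j) = 0"
        using v(3) mult_vec[of _ "($) v"] by (metis index_zero_vec(1))
      then have "v = 0\<^sub>v n"
        using trivial_kernel v(1) by (intro eq_vecI) auto
      then show False
        using v(2) by simp
    qed
  qed
qed

definition row_minor :: "(nat \<Rightarrow> nat \<Rightarrow> complex) \<Rightarrow> nat list \<Rightarrow> complex" where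
  "row_minor F R = det (mat (length R) (length R) (\<lambda>(l, j). F j (R ! l)))"

lemma row_minor_nonzero_imp_coeffs_zero:
  assumes "row_minor F R \<noteq> 0" and "\<forall>r\<in>set R. (\<Sum>j<length R. c j * F j r) = 0" and "j < length R"
  shows "c j = 0"
proof -
  have trivial_kernel: "\<forall>c. (\<forall>l<length R. (\<Sum>j<length R. F j (R ! l) * c j) = 0) \<longrightarrow>
      (\<forall>j<length R. c j = 0)"
    using assms(1) det_mat_nonzero_iff[of "length R" "\<lambda>l j. F j (R ! l)"]
    unfolding row_minor_def by simp
  have "\<forall>l<length R. (\<Sum>j<length R. F j (R ! l) * c j) = 0"
    using assms(2) by (simp add: mult.commute)
  with trivial_kernel assms(3) show ?thesis
    by blast
qed

lemma row_minor_nonzero_imp_lin_indep: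
  assumes "row_minor F R \<noteq> 0"
  shows "lin_indep F (length R)"
  unfolding lin_indep_def
proof (intro allI impI)
  fix c j
  assume "(\<lambda>i. \<Sum>j<length R. c j * F j i) = (\<lambda>i. 0)" and "j < length R"
  then show "c j = 0"
    using assms by (intro row_minor_nonzero_imp_coeffs_zero[of F R c]) (simp_all add: fun_eq_iff)
qed

lemma row_minor_nonzero_imp_vanishing_eq_zero:
  assumes minor: "row_minor F R \<noteq> 0" and "y \<in> lspan F (length R)" and "\<forall>r\<in>set R. y r = 0"
  shows "y = (\<lambda>i. 0)"
proof -
  obtain c where y: "y = (\<lambda>i. \<Sum>j<length R. c j * F j i)"
    using assms(2) unfolding lspan_def by blast
  then have "\<forall>j<length R. c j = 0"
    using row_minor_nonzero_imp_coeffs_zero[OF minor] assms(3) by simp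
  then show ?thesis
    using y by simp
qed

lemma scaled_first_in_lspan: "(\<lambda>i. a * F 0 i) \<in> lspan F (Suc n)"
proof -
  have "(\<lambda>i. a * F 0 i) = (\<lambda>i. \<Sum>j<Suc n. (if j = 0 then a else 0) * F j i)"
    unfolding sum.lessThan_Suc_shift by simp
  then show ?thesis
    unfolding lspan_def by (intro CollectI exI)
qed

lemma lspan_diff_scaled_first:
  assumes "y \<in> lspan F (Suc n)"
  shows "(\<lambda>i. y i - a * F 0 i) \<in> lspan F (Suc n)"
proof -
  obtain c where "y = (\<lambda>i. \<Sum>j<Suc n. c j * F j i)"
    using assms unfolding lspan_def by blast
  then have "(\<lambda>i. y i - a * F 0 i) = (\<lambda>i. \<Sum>j<Suc n. (c(0 := c 0 - a)) j * F j i)"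
    unfolding sum.lessThan_Suc_shift by (simp add: algebra_simps)
  then show ?thesis
    unfolding lspan_def by (intro CollectI exI)
qed

lemma lspan_inter_coordsub_eq_zero:
  assumes "row_minor F R \<noteq> 0" and "set R \<inter> S = {}"
  shows "lspan F (length R) \<inter> coordsub S = {\<lambda>i. 0}"
proof (intro equalityI subsetI)
  fix y
  assume "y \<in> lspan F (length R) \<inter> coordsub S"
  then show "y \<in> {\<lambda>i. 0}"
    using row_minor_nonzero_imp_vanishing_eq_zero[OF assms(1), of y] assms(2)
    unfolding coordsub_def by blast
next
  fix y :: "nat \<Rightarrow> complex"
  assume "y \<in> {\<lambda>i. 0}"
  then show "y \<in> lspan F (length R) \<inter> coordsub S"
    unfolding lspan_def coordsub_def by (auto intro!: exI[of _ "\<lambda>_. 0"])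
qed

lemma lspan_inter_coordsub_eq_line:
  assumes minor: "row_minor F (r # rs) \<noteq> 0" and first: "F 0 \<in> coordsub T" "F 0 r \<noteq> 0"
    and disjoint: "set rs \<inter> T = {}"
  shows "lspan F (Suc (length rs)) \<inter> coordsub T = {y. \<exists>c. y = (\<lambda>i. c * F 0 i)}"
proof (intro equalityI subsetI)
  fix y
  assume y: "y \<in> lspan F (Suc (length rs)) \<inter> coordsub T"
  define a where "a = y r / F 0 r"
  have "\<forall>i\<in>set (r # rs). y i - a * F 0 i = 0"
    using y first disjoint unfolding a_def coordsub_def by (auto simp: disjoint_iff)
  then have "(\<lambda>i. y i - a * F 0 i) = (\<lambda>i. 0)"
    using row_minor_nonzero_imp_vanishing_eq_zero[OF minor] lspan_diff_scaled_first y by simp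
  then have "y = (\<lambda>i. a * F 0 i)"
    by (simp add: fun_eq_iff)
  then show "y \<in> {y. \<exists>c. y = (\<lambda>i. c * F 0 i)}"
    by blast
next
  fix y
  assume "y \<in> {y. \<exists>c. y = (\<lambda>i. c * F 0 i)}"
  then show "y \<in> lspan F (Suc (length rs)) \<inter> coordsub T"
    using scaled_first_in_lspan first(1) unfolding coordsub_def by auto
qed

lemma frame_0 [simp]: "frame N w x 0 = w"
  by (simp add: fun_eq_iff frame_def)

lemma polyfun_row_minor_frame: "polyfun (\<lambda>x. row_minor (frame N w x) R)"
proof -
  have "polyfun (\<lambda>x. frame N w x j i)" for j i
    unfolding frame_def by (cases "j = 0"; cases "i < N") (simp_all add: polyfun.intros)
  then show ?thesis
    unfolding row_minor_def using polyfun_det[of "\<lambda>l j x. frame N w x j (R ! l)"] by simp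
qed

lemma row_minor_frame_nonvanishing:
  assumes distinct: "distinct (r # rs)" and rows: "set rs \<subseteq> {0..<N}" and "w r \<noteq> 0"
  shows "\<exists>x. row_minor (frame N w x) (r # rs) \<noteq> 0"
proof -
  let ?R = "r # rs" and ?n = "Suc (length rs)"
  define x where "x = (\<lambda>(j, i). if i = rs ! j then 1 else (0::complex))"
  have entry: "frame N w x j (?R ! l) = (if j = 0 then w (?R ! l) else if l = j then 1 else 0)"
    if "l < ?n" and "j < ?n" for l j
  proof (cases j)
    case (Suc j')
    have "(?R ! l = rs ! j') \<longleftrightarrow> l = j"
      using distinct that Suc nth_eq_iff_index_eq[OF distinct, of l j] by simp
    moreover have "?R ! l < N \<or> l = 0"
      using rows that by (cases l) (auto dest: nth_mem)
    ultimately show ?thesis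
      using Suc by (auto simp: frame_def x_def)
  qed (simp add: frame_def)
  have "row_minor (frame N w x) ?R \<noteq> 0"
    unfolding row_minor_def length_Cons det_mat_nonzero_iff
  proof (intro allI impI)
    fix c j
    assume kernel: "\<forall>l<?n. (\<Sum>j<?n. frame N w x j (?R ! l) * c j) = 0" and "j < ?n"
    have row: "w (?R ! l) * c 0 + (if l = 0 then 0 else c l) = 0" if "l < ?n" for l
    proof -
      have "(\<Sum>j<?n. frame N w x j (?R ! l) * c j) =
          (\<Sum>j<?n. (if j = 0 then w (?R ! l) * c 0 else 0) + (if j = l \<and> l \<noteq> 0 then c l else 0))"
        using entry that by (intro sum.cong) auto
      also have "\<dots> = w (?R ! l) * c 0 + (if l = 0 then 0 else c l)"
        using that by (auto simp: sum.distrib sum.If_cases)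
      finally show ?thesis
        using kernel that by simp
    qed
    have "c 0 = 0"
      using row[of 0] \<open>w r \<noteq> 0\<close> by simp
    then show "c j = 0"
      using row[OF \<open>j < ?n\<close>] by (cases "j = 0") simp_all
  qed
  then show ?thesis
    by blast
qed

lemma exists_distinct_list_in_set:
  assumes "finite U" and "m \<le> card U"
  shows "\<exists>xs. distinct xs \<and> length xs = m \<and> set xs \<subseteq> U"
proof -
  obtain D where "D \<subseteq> U" and "card D = m" and "finite D"
    using obtain_subset_with_card_n[OF assms(2)] by blast
  moreover obtain xs where "set xs = D" and "distinct xs"
    using finite_distinct_list[OF \<open>finite D\<close>] by blast
  moreover have "length xs = m"
    using distinct_card[OF \<open>distinct xs\<close>] \<open>set xs = D\<close> \<open>card D = m\<close> by simp
  ultimately show ?thesis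
    by blast
qed

lemma exists_rows_beyond:
  assumes "0 < K" and "K + Suc m \<le> N"
  obtains rs where "distinct (0 # rs)" and "length rs = m" and "set (0 # rs) \<subseteq> {0..<N}"
    and "set rs \<inter> {0..<K} = {}"
proof -
  have "m \<le> card {K..<N}"
    using assms(2) by simp
  then obtain rs where "distinct rs" "length rs = m" "set rs \<subseteq> {K..<N}"
    using exists_distinct_list_in_set[OF finite_atLeastLessThan] by blast
  moreover have "0 \<notin> set rs" and "set rs \<subseteq> {0..<N}" and "set rs \<inter> {0..<K} = {}"
    using \<open>set rs \<subseteq> {K..<N}\<close> assms(1) by auto
  ultimately show thesis
    using that assms by auto
qed

lemma exists_rows_avoiding:
  assumes S: "S \<subseteq> {0..<N}" "card S = K" "S \<noteq> {0..<K}" and "K + Suc m \<le> N"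
  obtains k rs where "k < K" and "distinct (k # rs)" and "length rs = m"
    and "set (k # rs) \<subseteq> {0..<N} - S"
proof -
  have "finite S"
    using S(1) finite_subset by blast
  have "\<not> {0..<K} \<subseteq> S"
  proof
    assume "{0..<K} \<subseteq> S"
    then have "{0..<K} = S"
      using card_subset_eq[OF \<open>finite S\<close>] S(2) by simp
    then show False
      using S(3) by simp
  qed
  then obtain k where k: "k < K" "k \<notin> S"
    by (auto simp: subset_iff)
  have "m \<le> card ({0..<N} - S - {k})"
    using S(1,2) k \<open>finite S\<close> \<open>K + Suc m \<le> N\<close> by (simp add: card_Diff_subset)
  then obtain rs where "distinct rs" "length rs = m" "set rs \<subseteq> {0..<N} - S - {k}"
    using exists_distinct_list_in_set[of "{0..<N} - S - {k}" m] by auto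
  then show thesis
    using that k \<open>K + Suc m \<le> N\<close> by auto
qed

lemma frame_minors_generically_nonzero:
  obtains P where "polyfun P" and "\<exists>x. P x \<noteq> 0"
    and "\<And>x r rs. P x \<noteq> 0 \<Longrightarrow> distinct (r # rs) \<Longrightarrow> set (r # rs) \<subseteq> {0..<N} \<Longrightarrow>
      length rs = m \<Longrightarrow> w r \<noteq> 0 \<Longrightarrow> row_minor (frame N w x) (r # rs) \<noteq> 0"
proof -
  define Rows where "Rows = {R. set R \<subseteq> {0..<N} \<and> length R = Suc m \<and> distinct R \<and> w (hd R) \<noteq> 0}"
  have "finite Rows"
    unfolding Rows_def
    by (rule finite_subset[OF _ finite_lists_length_eq[OF finite_atLeastLessThan, of 0 N "Suc m"]]) auto
  moreover have "\<exists>x. row_minor (frame N w x) R \<noteq> 0" if "R \<in> Rows" for R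
    using that row_minor_frame_nonvanishing unfolding Rows_def by (cases R) auto
  ultimately obtain P where "polyfun P" "\<exists>x. P x \<noteq> 0"
    and "\<And>x R. P x \<noteq> 0 \<Longrightarrow> R \<in> Rows \<Longrightarrow> row_minor (frame N w x) R \<noteq> 0"
    using polyfun_common_nonvanishing[of Rows "\<lambda>R x. row_minor (frame N w x) R"]
      polyfun_row_minor_frame by blast
  then show thesis
    using that unfolding Rows_def by simp
qed

theorem lemma3p8:
  fixes N K M :: nat and w :: "nat \<Rightarrow> complex"
  assumes "0 < K" and "0 < M" and "K \<le> N - M"
    and "w \<in> coordsub_star {0..<K}"
  shows "\<exists>P. polyfun P \<and> (\<exists>x. P x \<noteq> 0) \<and>
    (\<forall>x. P x \<noteq> 0 \<longrightarrow>
       (let L = lspan (frame N w x) M in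
          lin_indep (frame N w x) M \<and>
          L \<inter> coordsub {0..<K} = {y. \<exists>c::complex. y = (\<lambda>i. c * w i)} \<and>
          (\<forall>S. S \<subseteq> {0..<N} \<and> card S = K \<and> S \<noteq> {0..<K} \<longrightarrow>
               L \<inter> coordsub S = {\<lambda>i. 0})))"
proof -
  obtain m where M: "M = Suc m"
    using assms(2) gr0_implies_Suc by blast
  have KmN: "K + Suc m \<le> N"
    using assms(1,3) M by linarith
  have w: "w \<in> coordsub {0..<K}" "\<And>k. k < K \<Longrightarrow> w k \<noteq> 0"
    using assms(4) unfolding coordsub_star_def by auto
  obtain P where P: "polyfun P" "\<exists>x. P x \<noteq> 0"
    and minors: "\<And>x r rs. P x \<noteq> 0 \<Longrightarrow> distinct (r # rs) \<Longrightarrow> set (r # rs) \<subseteq> {0..<N} \<Longrightarrow>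
      length rs = m \<Longrightarrow> w r \<noteq> 0 \<Longrightarrow> row_minor (frame N w x) (r # rs) \<noteq> 0"
    using frame_minors_generically_nonzero by blast
  obtain rs0 where rs0: "distinct (0 # rs0)" "length rs0 = m" "set (0 # rs0) \<subseteq> {0..<N}"
    "set rs0 \<inter> {0..<K} = {}"
    using exists_rows_beyond[OF assms(1) KmN] by blast
  have indep: "lin_indep (frame N w x) M"
    and line: "lspan (frame N w x) M \<inter> coordsub {0..<K} = {y. \<exists>c. y = (\<lambda>i. c * w i)}"
    if "P x \<noteq> 0" for x
    using minors[OF that rs0(1,3,2)] row_minor_nonzero_imp_lin_indep[of "frame N w x" "0 # rs0"]
      lspan_inter_coordsub_eq_line[of "frame N w x" 0 rs0 "{0..<K}"] rs0(2,4) w assms(1)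
    unfolding M by simp_all
  have avoid: "lspan (frame N w x) M \<inter> coordsub S = {\<lambda>i. 0}"
    if Px: "P x \<noteq> 0" and S: "S \<subseteq> {0..<N} \<and> card S = K \<and> S \<noteq> {0..<K}" for x S
  proof -
    obtain k rs where "k < K" "distinct (k # rs)" "length rs = m" "set (k # rs) \<subseteq> {0..<N} - S"
      using exists_rows_avoiding[of S N K m] S KmN by blast
    then show ?thesis
      using minors[OF Px, of k rs] lspan_inter_coordsub_eq_zero[of "frame N w x" "k # rs" S] w(2)
      unfolding M by auto
  qed
  show ?thesis
    using P indep line avoid unfolding Let_def by blast
qed

end
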